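(* For every $w\in\mathcal{W}$, the set $D^1(w):=\operatorname{conv}(\mathcal{P}\setminus\operatorname{int}(\mathcal{C}_{\rm ID}(w)))$ is a polyhedron.
   Context: Data: $d^2\in\mathbb{Q}^{n_2}$; $A^1\in\mathbb{Q}^{m_1\times n_1}$, $G^1\in\mathbb{Q}^{m_1\times n_2}$, $b^1\in\mathbb{Q}^{m_1}$; $A^2\in\mathbb{Q}^{m_2\times n_1}$, $G^2\in\mathbb{Q}^{m_2\times n_2}$, $b^2\in\mathbb{Q}^{m_2}$; integers $0\le r_1\le n_1$, $0\le r_2\le n_2$. $\mathcal{P}=\{(x,y)\in\mathbb{R}_+^{n_1}\times\mathbb{R}_+^{n_2}: G^1y\ge b^1-A^1x,\ G^2y\ge b^2-A^2x\}$, assumed bounded. An improving direction is $w\in\mathbb{Z}^{r_2}\times\mathbb{R}^{n_2-r_2}$ with $d^2w<0$; $\mathcal{W}$ is the set of all improving directions. For $w\in\mathcal{W}$, $\mathcal{C}_{\rm ID}(w)=\{(x,y)\in\mathbb{R}^{n_1}\times\mathbb{R}^{n_2}: A^2x+G^2(y+w)\ge b^2-\mathbf{1},\ y+w\ge-\mathbf{1}\}$, where $\mathbf{1}$ denotes the all-ones vector of appropriate dimension; $\operatorname{int}$ denotes topological interior. *)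

theory Defs
  imports "HOL-Analysis.Analysis"
begin

text \<open>Vectors in R^n are modelled as real^'n with a finite linearly ordered index
type; the "first r coordinates" of such a vector are those indices i having
fewer than r indices strictly below them.\<close>

definition first_coords :: "nat \<Rightarrow> 'n::linorder set" where
  "first_coords r = {i. card {j. j < i} < r}"

definition rat_vec :: "real ^ 'n \<Rightarrow> bool" where
  "rat_vec v \<longleftrightarrow> (\<forall>i. v $ i \<in> \<rat>)"

definition rat_mat :: "real ^ 'n ^ 'm \<Rightarrow> bool" where
  "rat_mat M \<longleftrightarrow> (\<forall>i j. M $ i $ j \<in> \<rat>)"

definition polyP ::
  "real ^ 'n1 ^ 'm1 \<Rightarrow> real ^ 'n2 ^ 'm1 \<Rightarrow> real ^ 'm1 \<Rightarrow>
   real ^ 'n1 ^ 'm2 \<Rightarrow> real ^ 'n2 ^ 'm2 \<Rightarrow> real ^ 'm2 \<Rightarrow>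
   ((real ^ 'n1) \<times> (real ^ 'n2)) set" where
  "polyP A1 G1 b1 A2 G2 b2 =
     {(x, y). (\<forall>i. 0 \<le> x $ i) \<and> (\<forall>j. 0 \<le> y $ j) \<and>
              (\<forall>k. (G1 *v y) $ k \<ge> b1 $ k - (A1 *v x) $ k) \<and>
              (\<forall>k. (G2 *v y) $ k \<ge> b2 $ k - (A2 *v x) $ k)}"

definition improving_dirs :: "(real, 'n2::{finite,linorder}) vec \<Rightarrow> nat \<Rightarrow> (real, 'n2) vec set" where
  "improving_dirs d2 r2 =
     {w. (\<forall>i \<in> first_coords r2. w $ i \<in> \<int>) \<and> d2 \<bullet> w < 0}"

definition C_ID ::
  "real ^ 'n1 ^ 'm2 \<Rightarrow> real ^ 'n2 ^ 'm2 \<Rightarrow> real ^ 'm2 \<Rightarrow> real ^ 'n2 \<Rightarrow>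
   ((real ^ 'n1) \<times> (real ^ 'n2)) set" where
  "C_ID A2 G2 b2 w =
     {(x, y). (\<forall>k. (A2 *v x + G2 *v (y + w)) $ k \<ge> b2 $ k - 1) \<and>
              (\<forall>j. (y + w) $ j \<ge> - 1)}"

end

theory Submission
  imports Defs
begin

text \<open>\<open>C_ID w\<close> is a finite intersection of closed halfspaces \<open>H\<^sub>i\<close>, so the complement of
its interior is the finite union of the complements of the \<open>interior H\<^sub>i\<close>, each of which is a
closed halfspace or a trivial set. Hence \<open>P - interior (C_ID w)\<close> is a finite union of the
polytopes \<open>P \<inter> - interior H\<^sub>i\<close>, and the convex hull of finitely many polytopes is a
polytope.\<close>

lemma interior_INT:
  fixes H :: "'i \<Rightarrow> 'a::topological_space set"
  assumes "finite I"
  shows "interior (\<Inter>i\<in>I. H i) = (\<Inter>i\<in>I. interior (H i))"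
  using assms by (induction I rule: finite_induct) auto

lemma convex_hull_UN_convex_hull:
  "convex hull (\<Union>i\<in>I. convex hull V i) = convex hull (\<Union>i\<in>I. V i)"
proof
  show "convex hull (\<Union>i\<in>I. convex hull V i) \<subseteq> convex hull (\<Union>i\<in>I. V i)"
    by (rule hull_minimal) (auto intro: hull_mono[THEN subsetD])
  show "convex hull (\<Union>i\<in>I. V i) \<subseteq> convex hull (\<Union>i\<in>I. convex hull V i)"
    by (rule hull_mono) (auto intro: hull_inc)
qed

lemma polytope_convex_hull_UN:
  fixes S :: "'i \<Rightarrow> 'a::euclidean_space set"
  assumes "finite I" and "\<And>i. i \<in> I \<Longrightarrow> polytope (S i)"
  shows "polytope (convex hull (\<Union>i\<in>I. S i))"
proof -
  obtain V where V: "\<And>i. i \<in> I \<Longrightarrow> finite (V i) \<and> S i = convex hull V i"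
    using assms(2) unfolding polytope_def by metis
  then have "convex hull (\<Union>i\<in>I. S i) = convex hull (\<Union>i\<in>I. V i)"
    by (simp add: convex_hull_UN_convex_hull)
  moreover have "finite (\<Union>i\<in>I. V i)"
    using assms(1) V by blast
  ultimately show ?thesis
    by (simp add: polytope_convex_hull)
qed

lemma polyhedron_halfspaces_ge:
  fixes a :: "'i::finite \<Rightarrow> 'a::euclidean_space" and c :: "'i \<Rightarrow> real"
  shows "polyhedron {z. \<forall>i. c i \<le> a i \<bullet> z}"
proof -
  have "{z. \<forall>i. c i \<le> a i \<bullet> z} = \<Inter>(range (\<lambda>i. {z. c i \<le> a i \<bullet> z}))"
    by auto
  then show ?thesis
    by (auto simp: polyhedron_halfspace_ge)
qed

lemma polyhedron_Compl_interior_halfspace_ge: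
  fixes a :: "'a::euclidean_space"
  shows "polyhedron (- interior {z. c \<le> a \<bullet> z})"
proof (cases "a = 0")
  case True
  then have "{z. c \<le> a \<bullet> z} = UNIV \<or> {z. c \<le> a \<bullet> z} = {}"
    by auto
  then show ?thesis
    by auto
next
  case False
  then have "- interior {z. c \<le> a \<bullet> z} = {z. a \<bullet> z \<le> c}"
    by auto
  then show ?thesis
    by (simp add: polyhedron_halfspace_le)
qed

lemma polytope_convex_hull_diff_interior_halfspaces:
  fixes a :: "'i::finite \<Rightarrow> 'a::euclidean_space" and c :: "'i \<Rightarrow> real"
  assumes "polyhedron P" and "bounded P"
  shows "polytope (convex hull (P - interior {z. \<forall>i. c i \<le> a i \<bullet> z}))"
proof -
  define H where "H i = {z. c i \<le> a i \<bullet> z}" for i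
  have "{z. \<forall>i. c i \<le> a i \<bullet> z} = (\<Inter>i\<in>UNIV. H i)"
    by (auto simp: H_def)
  then have diff_eq: "P - interior {z. \<forall>i. c i \<le> a i \<bullet> z} = (\<Union>i\<in>UNIV. P \<inter> - interior (H i))"
    by (auto simp: interior_INT)
  have "polytope (P \<inter> - interior (H i))" for i
    using assms
    by (simp add: H_def polytope_eq_bounded_polyhedron bounded_Int
        polyhedron_Compl_interior_halfspace_ge)
  then have "polytope (convex hull (\<Union>i\<in>UNIV. P \<inter> - interior (H i)))"
    by (intro polytope_convex_hull_UN) auto
  then show ?thesis
    by (simp only: diff_eq)
qed

lemma polyhedron_polyP: "polyhedron (polyP A1 G1 b1 A2 G2 b2)"
proof -
  have "polyP A1 G1 b1 A2 G2 b2 =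
      {z. \<forall>i. 0 \<le> (axis i 1, 0) \<bullet> z} \<inter> {z. \<forall>j. 0 \<le> (0, axis j 1) \<bullet> z} \<inter>
      {z. \<forall>k. b1 $ k \<le> (A1 $ k, G1 $ k) \<bullet> z} \<inter> {z. \<forall>k. b2 $ k \<le> (A2 $ k, G2 $ k) \<bullet> z}"
    by (auto simp: polyP_def inner_Pair inner_axis' matrix_vector_mul_component algebra_simps)
  then show ?thesis
    by (simp only: polyhedron_Int polyhedron_halfspaces_ge)
qed

lemma C_ID_eq_halfspaces:
  fixes A2 :: "real ^ 'n1 ^ 'm2" and G2 :: "real ^ 'n2 ^ 'm2" and b2 :: "real ^ 'm2"
    and w :: "real ^ 'n2"
  obtains a :: "'m2 + 'n2 \<Rightarrow> (real ^ 'n1) \<times> (real ^ 'n2)" and c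
  where "C_ID A2 G2 b2 w = {z. \<forall>i. c i \<le> a i \<bullet> z}"
proof
  define a :: "'m2 + 'n2 \<Rightarrow> (real ^ 'n1) \<times> (real ^ 'n2)" where
    "a i = (case i of Inl k \<Rightarrow> (A2 $ k, G2 $ k) | Inr j \<Rightarrow> (0, axis j 1))" for i
  define c where
    "c i = (case i of Inl k \<Rightarrow> b2 $ k - 1 - (G2 *v w) $ k | Inr j \<Rightarrow> - 1 - w $ j)" for i
  have "c i \<le> a i \<bullet> (x, y) \<longleftrightarrow>
      (case i of Inl k \<Rightarrow> b2 $ k - 1 \<le> (A2 *v x + G2 *v (y + w)) $ k
               | Inr j \<Rightarrow> - 1 \<le> (y + w) $ j)" for i x y
    by (cases i) (auto simp: a_def c_def matrix_vector_right_distrib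
        matrix_vector_mul_component inner_axis inner_commute algebra_simps)
  then show "C_ID A2 G2 b2 w = {z. \<forall>i. c i \<le> a i \<bullet> z}"
    by (auto simp: C_ID_def split: sum.splits)
qed

theorem proposition3:
  fixes d2 :: "(real, 'n2::{finite,linorder}) vec"
    and A1 :: "((real, 'n1::{finite,linorder}) vec, 'm1::finite) vec"
    and G1 :: "((real, 'n2) vec, 'm1) vec" and b1 :: "(real, 'm1) vec"
    and A2 :: "((real, 'n1) vec, 'm2::finite) vec"
    and G2 :: "((real, 'n2) vec, 'm2) vec" and b2 :: "(real, 'm2) vec"
    and r1 r2 :: nat
    and w :: "(real, 'n2) vec"
  assumes "rat_vec d2"
    and "rat_mat A1" and "rat_mat G1" and "rat_vec b1"
    and "rat_mat A2" and "rat_mat G2" and "rat_vec b2"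
    and "r1 \<le> CARD('n1)" and "r2 \<le> CARD('n2)"
    and "bounded (polyP A1 G1 b1 A2 G2 b2)"
    and "w \<in> improving_dirs d2 r2"
  shows "polyhedron (convex hull (polyP A1 G1 b1 A2 G2 b2 - interior (C_ID A2 G2 b2 w)))"
proof -
  obtain a :: "'m2 + 'n2 \<Rightarrow> (real, 'n1) vec \<times> (real, 'n2) vec" and c
    where C_ID_eq: "C_ID A2 G2 b2 w = {z. \<forall>i. c i \<le> a i \<bullet> z}"
    by (rule C_ID_eq_halfspaces)
  have "polytope (convex hull (polyP A1 G1 b1 A2 G2 b2 - interior (C_ID A2 G2 b2 w)))"
    unfolding C_ID_eq
    by (rule polytope_convex_hull_diff_interior_halfspaces[OF polyhedron_polyP assms(10)])
  then show ?thesis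
    by (rule polytope_imp_polyhedron)
qed

end
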